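(* Let $H$ be a real Hilbert space and consider the problem $$\text{minimize } J(x):=a_J\|x\|^2+2\langle b_J,x\rangle+c_J\quad\text{subject to}\quad f_k(x):=a_k\|x\|^2+2\langle b_k,x\rangle+c_k\le 0,\ k=1,\dots,m,$$ with $a_J,a_k,c_J,c_k\in\mathbb{R}$ and $b_J,b_k\in H$. Let $x^*$ be a global minimizer of this problem, set $a_0:=a_J$, $b_0:=b_J$, $c_0:=c_J-J(x^* )$, so that $f_0(x):=J(x)-J(x^* )=a_0\|x\|^2+2\langle b_0,x\rangle+c_0$, and define $$\Omega_0:=\{(f_0(x),f_1(x),\dots,f_m(x))\mid x\in H\}+\operatorname{int}\mathbb{R}^{m+1}_+ .$$ Suppose that one of the following holds: (1) $H$ is infinite dimensional; (2) $H$ has finite dimension $n\in\mathbb{N}$ and every maximal linearly independent subset of $\{b_0,b_1,\dots,b_m\}$ has cardinality $\bar m<n$. Then $\Omega_0$ is convex.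
   Context: $\|\cdot\|$ is the norm induced by the inner product of $H$. $\operatorname{int}\mathbb{R}^{m+1}_+$ is the set of vectors in $\mathbb{R}^{m+1}$ with strictly positive components and $+$ is the Minkowski sum. *)

theory Defs
  imports "HOL-Analysis.Analysis"
begin

definition quadf :: "real \<Rightarrow> 'a::real_inner \<Rightarrow> real \<Rightarrow> 'a \<Rightarrow> real" where
  "quadf a b c x = a * (norm x)^2 + 2 * (b \<bullet> x) + c"

text \<open>Vectors of R^(m+1) are represented as functions nat => real, indexed by 0..m,
  and vanishing outside {0..m}.  The set
  Omega = {(F 0 x, ..., F m x) | x} + int R^(m+1)_+.\<close>
definition Omega_set :: "nat \<Rightarrow> (nat \<Rightarrow> 'a \<Rightarrow> real) \<Rightarrow> (nat \<Rightarrow> real) set" where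
  "Omega_set m F = {y. \<exists>x z. (\<forall>k\<le>m. 0 < z k) \<and>
                          (\<forall>k. y k = (if k \<le> m then F k x + z k else 0))}"

definition convex_fun_set :: "(nat \<Rightarrow> real) set \<Rightarrow> bool" where
  "convex_fun_set S \<longleftrightarrow> (\<forall>u\<in>S. \<forall>v\<in>S. \<forall>t::real. 0 \<le> t \<and> t \<le> 1 \<longrightarrow>
                              (\<lambda>k. (1 - t) * u k + t * v k) \<in> S)"

end

theory Submission
  imports Defs
begin

(* Either dimension hypothesis ensures that b_0, ..., b_m do not span H, so there is a unit
   vector e orthogonal to all of them.  Given x, y and 0 <= t <= 1, the point
   w = (1 - t) x + t y + s e with s chosen so that |w|^2 = (1 - t) |x|^2 + t |y|^2 satisfies
   f_k(w) = (1 - t) f_k(x) + t f_k(y) for every k, since each f_k depends on w only through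
   |w|^2 and <b_k, w>.  Hence the joint image of (f_0, ..., f_m) is already convex, and so is
   its sum with the open orthant.  Neither the optimality of x* nor the value of c_0 plays
   any role. *)

lemma orthogonal_projection_onto_finite_span:
  fixes B :: "'a::real_inner set"
  assumes "finite B"
  shows "\<exists>p\<in>span B. \<forall>b\<in>B. orthogonal (y - p) b"
  using assms
proof (induction B arbitrary: y rule: finite_induct)
  case empty
  then show ?case by (auto intro: span_zero)
next
  case (insert b B)
  obtain pb where pb: "pb \<in> span B" "\<forall>c\<in>B. orthogonal (b - pb) c"
    using insert.IH by blast
  obtain py where py: "py \<in> span B" "\<forall>c\<in>B. orthogonal (y - py) c"
    using insert.IH by blast
  define b' where "b' = b - pb"
  \<comment> \<open>If b' = 0, the junk value x / 0 = 0 gives p = py, which is still correct.\<close>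
  define p where "p = py + ((y - py) \<bullet> b' / (b' \<bullet> b')) *\<^sub>R b'"
  have y_minus_p: "y - p = (y - py) - ((y - py) \<bullet> b' / (b' \<bullet> b')) *\<^sub>R b'"
    by (simp add: p_def)
  have "p \<in> span (insert b B)"
    using pb(1) py(1) unfolding p_def b'_def
    by (meson span_add span_diff span_scale span_base insertI1 span_mono subset_insertI subsetD)
  moreover have orth_B: "orthogonal (y - p) c" if "c \<in> B" for c
    using pb(2) py(2) that unfolding y_minus_p b'_def[symmetric] orthogonal_def
    by (simp add: inner_diff_left)
  moreover have "orthogonal (y - p) b"
  proof -
    have "orthogonal (y - p) b'"
      by (cases "b' = 0") (simp_all add: y_minus_p orthogonal_def inner_diff_left)
    moreover have "orthogonal (y - p) pb"
      using orthogonal_to_span[OF pb(1)] orth_B by blast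
    ultimately show ?thesis
      by (simp add: b'_def orthogonal_def inner_diff_right)
  qed
  ultimately show ?case by blast
qed

lemma unit_vector_orthogonal_to_finite_set:
  fixes B :: "'a::real_inner set"
  assumes "finite B" "span B \<noteq> UNIV"
  obtains e where "norm e = 1" "\<And>b. b \<in> B \<Longrightarrow> b \<bullet> e = 0"
proof -
  obtain y where y: "y \<notin> span B"
    using assms(2) by blast
  obtain p where p: "p \<in> span B" "\<forall>b\<in>B. orthogonal (y - p) b"
    using orthogonal_projection_onto_finite_span[OF assms(1)] by blast
  have "y - p \<noteq> 0"
    using y p(1) by auto
  then show ?thesis
    using p(2) by (intro that[of "(1 / norm (y - p)) *\<^sub>R (y - p)"])
      (simp_all add: orthogonal_def inner_commute)
qed

lemma power2_norm_convex_combination: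
  fixes x y :: "'a::real_inner"
  shows "(norm ((1 - t) *\<^sub>R x + t *\<^sub>R y))\<^sup>2 + t * (1 - t) * (norm (x - y))\<^sup>2
        = (1 - t) * (norm x)\<^sup>2 + t * (norm y)\<^sup>2"
  unfolding power2_norm_eq_inner
  by (simp add: inner_add_left inner_add_right inner_diff_left inner_diff_right
      inner_commute algebra_simps)

lemma power2_norm_add_scaleR_unit_vector:
  fixes p e :: "'a::real_inner"
  assumes "norm e = 1" "0 \<le> d"
  obtains s where "(norm (p + s *\<^sub>R e))\<^sup>2 = (norm p)\<^sup>2 + d"
proof
  let ?c = "p \<bullet> e"
  let ?s = "sqrt (?c\<^sup>2 + d) - ?c"
  have "e \<bullet> e = 1"
    using assms(1) by (simp add: dot_square_norm)
  then have "(norm (p + ?s *\<^sub>R e))\<^sup>2 = (norm p)\<^sup>2 + (2 * ?s * ?c + ?s\<^sup>2)"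
    unfolding power2_norm_eq_inner
    by (simp add: inner_add_left inner_add_right inner_commute algebra_simps power2_eq_square)
  also have "2 * ?s * ?c + ?s\<^sup>2 = d"
    using assms(2) by (simp add: algebra_simps power2_eq_square)
  finally show "(norm (p + ?s *\<^sub>R e))\<^sup>2 = (norm p)\<^sup>2 + d" .
qed

lemma quadf_convex_combination_attained:
  fixes x y e :: "'a::real_inner"
  assumes "norm e = 1" "0 \<le> t" "t \<le> 1"
  obtains w where
    "\<And>A q C. q \<bullet> e = 0 \<Longrightarrow> quadf A q C w = (1 - t) * quadf A q C x + t * quadf A q C y"
proof -
  define p where "p = (1 - t) *\<^sub>R x + t *\<^sub>R y"
  have "0 \<le> t * (1 - t) * (norm (x - y))\<^sup>2"
    using assms(2,3) by simp
  then obtain s where s: "(norm (p + s *\<^sub>R e))\<^sup>2 = (norm p)\<^sup>2 + t * (1 - t) * (norm (x - y))\<^sup>2"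
    using power2_norm_add_scaleR_unit_vector[OF assms(1)] by blast
  define w where "w = p + s *\<^sub>R e"
  have norm_w: "(norm w)\<^sup>2 = (1 - t) * (norm x)\<^sup>2 + t * (norm y)\<^sup>2"
    using s power2_norm_convex_combination[of t x y] unfolding w_def p_def by simp
  have "quadf A q C w = (1 - t) * quadf A q C x + t * quadf A q C y" if "q \<bullet> e = 0" for A q C
  proof -
    have "q \<bullet> w = (1 - t) * (q \<bullet> x) + t * (q \<bullet> y)"
      using that by (simp add: w_def p_def inner_add_right)
    then show ?thesis
      unfolding quadf_def norm_w by (simp add: algebra_simps)
  qed
  then show ?thesis
    using that by blast
qed

lemma convex_fun_set_Omega_set:
  assumes "\<And>x y t. 0 \<le> t \<Longrightarrow> t \<le> 1 \<Longrightarrow> \<exists>w. \<forall>k\<le>m. F k w = (1 - t) * F k x + t * F k y"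
  shows "convex_fun_set (Omega_set m F)"
  unfolding convex_fun_set_def
proof (intro ballI allI impI)
  fix u v and t :: real
  assume "u \<in> Omega_set m F" "v \<in> Omega_set m F" and t: "0 \<le> t \<and> t \<le> 1"
  then obtain x z y z' where
    z: "\<forall>k\<le>m. 0 < z k" "\<forall>k. u k = (if k \<le> m then F k x + z k else 0)" and
    z': "\<forall>k\<le>m. 0 < z' k" "\<forall>k. v k = (if k \<le> m then F k y + z' k else 0)"
    unfolding Omega_set_def by auto
  obtain w where w: "\<forall>k\<le>m. F k w = (1 - t) * F k x + t * F k y"
    using assms t by blast
  have "0 < (1 - t) * z k + t * z' k" if "k \<le> m" for k
    using z(1) z'(1) t that
    by (cases "t = 0") (auto intro!: add_nonneg_pos mult_pos_pos)
  moreover have "(1 - t) * u k + t * v k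
      = (if k \<le> m then F k w + ((1 - t) * z k + t * z' k) else 0)" for k
    using z(2) z'(2) w by (simp add: algebra_simps)
  ultimately show "(\<lambda>k. (1 - t) * u k + t * v k) \<in> Omega_set m F"
    unfolding Omega_set_def mem_Collect_eq
    by (intro exI[of _ w] exI[of _ "\<lambda>k. (1 - t) * z k + t * z' k"]) simp
qed

lemma convex_fun_set_Omega_set_quadf:
  fixes b :: "nat \<Rightarrow> 'a::real_inner"
  assumes "finite B" "span B \<noteq> UNIV" "\<And>k. k \<le> m \<Longrightarrow> b k \<in> B"
  shows "convex_fun_set (Omega_set m (\<lambda>k. quadf (a k) (b k) (c k)))"
proof -
  obtain e where e: "norm e = 1" "\<And>q. q \<in> B \<Longrightarrow> q \<bullet> e = 0"
    using unit_vector_orthogonal_to_finite_set assms(1,2) by metis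
  show ?thesis
  proof (rule convex_fun_set_Omega_set)
    fix x y :: 'a and t :: real
    assume "0 \<le> t" "t \<le> 1"
    then obtain w where "\<And>A q C. q \<bullet> e = 0 \<Longrightarrow>
        quadf A q C w = (1 - t) * quadf A q C x + t * quadf A q C y"
      using quadf_convex_combination_attained e(1) by metis
    then show "\<exists>w. \<forall>k\<le>m. quadf (a k) (b k) (c k) w
        = (1 - t) * quadf (a k) (b k) (c k) x + t * quadf (a k) (b k) (c k) y"
      using e(2) assms(3) by blast
  qed
qed

lemma maximal_independent_subset_card_dim:
  fixes B :: "'a::real_vector set"
  obtains S where "S \<subseteq> B" "independent S" "\<forall>T. S \<subset> T \<and> T \<subseteq> B \<longrightarrow> dependent T"
    "card S = dim B"
proof -
  obtain S where S: "S \<subseteq> B" "independent S" "B \<subseteq> span S"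
    by (rule maximal_independent_subset)
  have maximal: "\<forall>T. S \<subset> T \<and> T \<subseteq> B \<longrightarrow> dependent T"
  proof (intro allI impI)
    fix T
    assume T: "S \<subset> T \<and> T \<subseteq> B"
    then obtain v where v: "v \<in> T" "v \<notin> S"
      by blast
    have "S \<subseteq> T - {v}"
      using T v(2) by blast
    then have "v \<in> span (T - {v})"
      using v(1) T S(3) span_mono by blast
    then show "dependent T"
      using v(1) unfolding dependent_def by blast
  qed
  have "span S = span B"
    using S(1,3) by (metis span_mono span_span subset_antisym)
  then have "card S = dim B"
    using dim_eq_card[OF _ S(2)] by simp
  then show ?thesis
    using that[OF S(1,2) maximal] by blast
qed

theorem theorem4p1:
  fixes aJ cJ :: real and bJ :: "'a::{real_inner, complete_space}"
    and a c :: "nat \<Rightarrow> real" and b :: "nat \<Rightarrow> 'a" and m :: nat and xs :: 'a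
  assumes feas: "\<forall>k\<in>{1..m}. quadf (a k) (b k) (c k) xs \<le> 0"
    and glob: "\<forall>x. (\<forall>k\<in>{1..m}. quadf (a k) (b k) (c k) x \<le> 0)
                   \<longrightarrow> quadf aJ bJ cJ xs \<le> quadf aJ bJ cJ x"
    and dimcond:
      "(\<not> (\<exists>B::'a set. finite B \<and> span B = UNIV))
       \<or> ((\<exists>B::'a set. finite B \<and> span B = UNIV) \<and>
          (\<forall>S. S \<subseteq> insert bJ (b ` {1..m}) \<and> independent S \<and>
               (\<forall>T. S \<subset> T \<and> T \<subseteq> insert bJ (b ` {1..m}) \<longrightarrow> dependent T)
               \<longrightarrow> card S < dim (UNIV::'a set)))"
  shows "convex_fun_set (Omega_set m (\<lambda>k x. if k = 0
            then quadf aJ bJ (cJ - quadf aJ bJ cJ xs) x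
            else quadf (a k) (b k) (c k) x))"
proof -
  define B where "B = insert bJ (b ` {1..m})"
  have "finite B"
    by (simp add: B_def)
  obtain S where S: "S \<subseteq> B" "independent S" "\<forall>T. S \<subset> T \<and> T \<subseteq> B \<longrightarrow> dependent T"
    "card S = dim B"
    by (rule maximal_independent_subset_card_dim)
  have "span B \<noteq> UNIV"
  proof
    assume span_B: "span B = UNIV"
    then have "card S = dim (UNIV :: 'a set)"
      using S(4) dim_span by metis
    moreover have "card S < dim (UNIV :: 'a set)"
      using dimcond S(1-3) \<open>finite B\<close> span_B unfolding B_def[symmetric] by blast
    ultimately show False
      by simp
  qed
  have F: "(\<lambda>k x. if k = 0 then quadf aJ bJ (cJ - quadf aJ bJ cJ xs) x
                           else quadf (a k) (b k) (c k) x)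
      = (\<lambda>k. quadf (if k = 0 then aJ else a k) (if k = 0 then bJ else b k)
                   (if k = 0 then cJ - quadf aJ bJ cJ xs else c k))"
    by (simp add: fun_eq_iff)
  show ?thesis
    unfolding F using \<open>finite B\<close> \<open>span B \<noteq> UNIV\<close>
    by (rule convex_fun_set_Omega_set_quadf) (auto simp: B_def)
qed

end
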